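(* Every Generalized Median Mechanism $M:[0,1]^n\to[0,1]$ is DIC for every capacity $k$ with $1\le k\le n$.
   Context: There are $n$ agents $N=\{1,\dots,n\}$ with locations $x_i\in[0,1]$, profile $\boldsymbol{x}$. A mechanism is a deterministic function $M:[0,1]^n\to[0,1]$ giving the facility location from reported locations. The facility has capacity $k$. Given $\boldsymbol{x}$ and $s$, agent $i$ has higher priority than $j$ if $|s-x_i|<|s-x_j|$, ties broken by a fixed deterministic rule; $N_k^*(\boldsymbol{x},s)$ is the set of the $k$ highest-priority agents. Agent $i$'s ex-post equilibrium utility (of the subgame in which agents choose whether to travel to the capacity-$k$ facility, excess travellers rationed by priority) is $u_i^*(s,\boldsymbol{x},k)=1-|s-x_i|$ if $i\in N_k^*(\boldsymbol{x},s)$ and $0$ otherwise, computed at true locations. $M$ is DIC for capacity $k$ if for every $i$, every true profile $\boldsymbol{x}$, every $x_i'\in[0,1]$, and every reports $\hat{\boldsymbol{x}}_{-i}$ of the others, $u_i^*(M(x_i,\hat{\boldsymbol{x}}_{-i}),\boldsymbol{x},k)\ge u_i^*(M(x_i',\hat{\boldsymbol{x}}_{-i}),\boldsymbol{x},k)$. $M$ is a Generalized Median Mechanism if there are constants $a_S\in[0,1]$ for $S\subseteq N$ with $M(\boldsymbol{x})=\min_{S\subseteq N}\max\{\max_{i\in S}x_i,\,a_S\}$ for all $\boldsymbol{x}$ (for $S=\emptyset$ the inner term is $a_\emptyset$). *)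

theory Defs
  imports Complex_Main
begin

definition agents :: "nat \<Rightarrow> nat set" where
  "agents n = {1..n}"

definition profiles :: "nat \<Rightarrow> (nat \<Rightarrow> real) set" where
  "profiles n = {x. \<forall>j\<in>agents n. x j \<in> {0..1}}"

definition gm_term :: "(nat set \<Rightarrow> real) \<Rightarrow> (nat \<Rightarrow> real) \<Rightarrow> nat set \<Rightarrow> real" where
  "gm_term a x S = (if S = {} then a S else max (Max (x ` S)) (a S))"

definition is_GMM :: "nat \<Rightarrow> ((nat \<Rightarrow> real) \<Rightarrow> real) \<Rightarrow> bool" where
  "is_GMM n M \<longleftrightarrow> (\<exists>a :: nat set \<Rightarrow> real.
      (\<forall>S. S \<subseteq> agents n \<longrightarrow> a S \<in> {0..1}) \<and>
      (\<forall>x\<in>profiles n. M x = Min (gm_term a x ` Pow (agents n))))"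

text \<open>Priority: agent j has higher priority than agent i at facility s (true profile x)
  if it is strictly closer, ties broken by a fixed deterministic rule, modelled as a fixed
  strict order on agents given by an injective rank (smaller rank wins).\<close>

definition higher_prio :: "(nat \<Rightarrow> nat) \<Rightarrow> (nat \<Rightarrow> real) \<Rightarrow> real \<Rightarrow> nat \<Rightarrow> nat \<Rightarrow> bool" where
  "higher_prio rank x s j i \<longleftrightarrow>
     \<bar>s - x j\<bar> < \<bar>s - x i\<bar> \<or> (\<bar>s - x j\<bar> = \<bar>s - x i\<bar> \<and> rank j < rank i)"

definition top_k :: "nat \<Rightarrow> (nat \<Rightarrow> nat) \<Rightarrow> (nat \<Rightarrow> real) \<Rightarrow> real \<Rightarrow> nat \<Rightarrow> nat set" where
  "top_k n rank x s k = {i \<in> agents n. card {j \<in> agents n. higher_prio rank x s j i} < k}"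

definition eq_util :: "nat \<Rightarrow> (nat \<Rightarrow> nat) \<Rightarrow> nat \<Rightarrow> real \<Rightarrow> (nat \<Rightarrow> real) \<Rightarrow> nat \<Rightarrow> real" where
  "eq_util n rank i s x k = (if i \<in> top_k n rank x s k then 1 - \<bar>s - x i\<bar> else 0)"

definition DIC :: "nat \<Rightarrow> (nat \<Rightarrow> nat) \<Rightarrow> ((nat \<Rightarrow> real) \<Rightarrow> real) \<Rightarrow> nat \<Rightarrow> bool" where
  "DIC n rank M k \<longleftrightarrow>
     (\<forall>i\<in>agents n. \<forall>x\<in>profiles n. \<forall>x'\<in>{0..1::real}. \<forall>xh\<in>profiles n.
        eq_util n rank i (M (xh(i := x i))) x k \<ge> eq_util n rank i (M (xh(i := x'))) x k)"

end

theory Submission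
  imports Defs
begin

text \<open>A Generalized Median Mechanism is a min of maxes of the reports and constants, so, as a
  function of agent i's own report t, it is built from identities and constants by binary
  min and max.  Both operations preserve the property that the outcome f t under the truthful
  report t lies between t and the outcome f t' under any misreport t'.  A misreport thus can
  only move the facility further from x i, and moving the facility away from x i can only
  raise the priority of other agents relative to i; hence it neither increases i's distance
  nor brings i into the top k.  Neither the tie-breaking rule nor the bounds on k play a role.\<close>

definition truthful_between :: "(real \<Rightarrow> real) \<Rightarrow> bool" where
  "truthful_between f \<longleftrightarrow> (\<forall>t t'. t \<le> f t \<and> f t \<le> f t' \<or> f t' \<le> f t \<and> f t \<le> t)"

lemma truthful_between_const: "truthful_between (\<lambda>_. c)"
  unfolding truthful_between_def by auto

lemma truthful_between_ident: "truthful_between (\<lambda>t. t)"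
  unfolding truthful_between_def by auto

lemma truthful_between_min:
  assumes f: "truthful_between f" and g: "truthful_between g"
  shows "truthful_between (\<lambda>t. min (f t) (g t))"
  unfolding truthful_between_def
proof (intro allI)
  fix t t'
  have "t \<le> f t \<and> f t \<le> f t' \<or> f t' \<le> f t \<and> f t \<le> t"
    and "t \<le> g t \<and> g t \<le> g t' \<or> g t' \<le> g t \<and> g t \<le> t"
    using f g unfolding truthful_between_def by blast+
  then show "t \<le> min (f t) (g t) \<and> min (f t) (g t) \<le> min (f t') (g t') \<or>
             min (f t') (g t') \<le> min (f t) (g t) \<and> min (f t) (g t) \<le> t"
    by linarith
qed

lemma truthful_between_max:
  assumes f: "truthful_between f" and g: "truthful_between g"
  shows "truthful_between (\<lambda>t. max (f t) (g t))"
  unfolding truthful_between_def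
proof (intro allI)
  fix t t'
  have "t \<le> f t \<and> f t \<le> f t' \<or> f t' \<le> f t \<and> f t \<le> t"
    and "t \<le> g t \<and> g t \<le> g t' \<or> g t' \<le> g t \<and> g t \<le> t"
    using f g unfolding truthful_between_def by blast+
  then show "t \<le> max (f t) (g t) \<and> max (f t) (g t) \<le> max (f t') (g t') \<or>
             max (f t') (g t') \<le> max (f t) (g t) \<and> max (f t) (g t) \<le> t"
    by linarith
qed

lemma truthful_between_Min:
  assumes "finite A" "A \<noteq> {}" "\<And>S. S \<in> A \<Longrightarrow> truthful_between (\<lambda>t. F t S)"
  shows "truthful_between (\<lambda>t. Min (F t ` A))"
  using assms
proof (induction A rule: finite_ne_induct)
  case (singleton S)
  then show ?case by simp
next
  case (insert S A)
  then show ?case by (simp add: truthful_between_min)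
qed

lemma truthful_between_Max:
  assumes "finite A" "A \<noteq> {}" "\<And>j. j \<in> A \<Longrightarrow> truthful_between (\<lambda>t. F t j)"
  shows "truthful_between (\<lambda>t. Max (F t ` A))"
  using assms
proof (induction A rule: finite_ne_induct)
  case (singleton j)
  then show ?case by simp
next
  case (insert j A)
  then show ?case by (simp add: truthful_between_max)
qed

lemma truthful_between_gm_term:
  assumes "finite S"
  shows "truthful_between (\<lambda>t. gm_term a (x(i := t)) S)"
proof (cases "S = {}")
  case True
  then show ?thesis by (simp add: gm_term_def truthful_between_const)
next
  case False
  have "truthful_between (\<lambda>t. (x(i := t)) j)" for j
    by (cases "j = i") (simp_all add: truthful_between_ident truthful_between_const)
  then have "truthful_between (\<lambda>t. Max ((x(i := t)) ` S))"
    using truthful_between_Max[OF assms False, of "\<lambda>t j. (x(i := t)) j"] by simp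
  then show ?thesis
    using False by (simp add: gm_term_def truthful_between_max truthful_between_const)
qed

lemma truthful_between_gm_mechanism:
  assumes "finite A"
  shows "truthful_between (\<lambda>t. Min (gm_term a (x(i := t)) ` Pow A))"
  using assms
  by (intro truthful_between_Min[where F = "\<lambda>t. gm_term a (x(i := t))"])
     (auto intro: truthful_between_gm_term finite_subset)

lemma gm_mechanism_in_unit_interval:
  assumes "finite A" and a: "\<And>S. S \<subseteq> A \<Longrightarrow> a S \<in> {0..1}"
  shows "Min (gm_term a x ` Pow A) \<in> {0..1}"
proof -
  have "Min (gm_term a x ` Pow A) \<in> gm_term a x ` Pow A"
    using assms(1) by (intro Min_in) auto
  then obtain S where "S \<subseteq> A" and S: "Min (gm_term a x ` Pow A) = gm_term a x S"
    by auto
  then have "0 \<le> Min (gm_term a x ` Pow A)"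
    using a[of S] by (auto simp: gm_term_def)
  moreover have "Min (gm_term a x ` Pow A) \<le> gm_term a x {}"
    using assms(1) by (intro Min_le) auto
  ultimately show ?thesis
    using a[of "{}"] by (simp add: gm_term_def)
qed

lemma higher_prio_move_away:
  assumes "x i \<le> s \<and> s \<le> s' \<or> s' \<le> s \<and> s \<le> x i"
    and "higher_prio rank x s j i"
  shows "higher_prio rank x s' j i"
proof -
  have "\<bar>s' - x i\<bar> = \<bar>s - x i\<bar> + \<bar>s' - s\<bar>"
    using assms(1) by auto
  moreover have "\<bar>s' - x j\<bar> \<le> \<bar>s - x j\<bar> + \<bar>s' - s\<bar>"
    by linarith
  ultimately show ?thesis
    using assms(2) unfolding higher_prio_def by linarith
qed

lemma top_k_move_away:
  assumes "x i \<le> s \<and> s \<le> s' \<or> s' \<le> s \<and> s \<le> x i"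
    and "i \<in> top_k n rank x s' k"
  shows "i \<in> top_k n rank x s k"
proof -
  have "card {j \<in> agents n. higher_prio rank x s j i}
        \<le> card {j \<in> agents n. higher_prio rank x s' j i}"
    using higher_prio_move_away[where x = x and i = i, OF assms(1)]
    by (intro card_mono) (auto simp: agents_def)
  with assms(2) show ?thesis
    unfolding top_k_def by auto
qed

lemma eq_util_move_away:
  assumes "x i \<le> s \<and> s \<le> s' \<or> s' \<le> s \<and> s \<le> x i"
    and "x i \<in> {0..1}" and "s \<in> {0..1}"
  shows "eq_util n rank i s' x k \<le> eq_util n rank i s x k"
  using assms top_k_move_away[where x = x and i = i, OF assms(1)] unfolding eq_util_def by auto

theorem proposition3p8:
  fixes n k :: nat and rank :: "nat \<Rightarrow> nat" and M :: "(nat \<Rightarrow> real) \<Rightarrow> real"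
  assumes "inj_on rank (agents n)"
    and "is_GMM n M"
    and "1 \<le> k" and "k \<le> n"
  shows "DIC n rank M k"
  unfolding DIC_def
proof (intro ballI)
  fix i x x' xh
  assume i: "i \<in> agents n" and x: "x \<in> profiles n" and x': "x' \<in> {0..1::real}"
    and xh: "xh \<in> profiles n"
  obtain a where a: "\<And>S. S \<subseteq> agents n \<Longrightarrow> a S \<in> {0..1}"
    and M: "\<And>y. y \<in> profiles n \<Longrightarrow> M y = Min (gm_term a y ` Pow (agents n))"
    using assms(2) unfolding is_GMM_def by blast
  have fin: "finite (agents n)" by (simp add: agents_def)
  have xi: "x i \<in> {0..1}" using x i unfolding profiles_def by auto
  have "xh(i := t) \<in> profiles n" if "t \<in> {0..1}" for t
    using xh that unfolding profiles_def by auto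
  then have M_report: "M (xh(i := t)) = Min (gm_term a (xh(i := t)) ` Pow (agents n))"
    if "t \<in> {0..1}" for t
    using M that by blast
  have "x i \<le> M (xh(i := x i)) \<and> M (xh(i := x i)) \<le> M (xh(i := x')) \<or>
        M (xh(i := x')) \<le> M (xh(i := x i)) \<and> M (xh(i := x i)) \<le> x i"
    using truthful_between_gm_mechanism[OF fin, of a xh i]
    unfolding truthful_between_def M_report[OF xi] M_report[OF x'] by blast
  moreover have "M (xh(i := x i)) \<in> {0..1}"
    using gm_mechanism_in_unit_interval[OF fin a] M_report[OF xi] by simp
  ultimately show "eq_util n rank i (M (xh(i := x'))) x k \<le> eq_util n rank i (M (xh(i := x i))) x k"
    using eq_util_move_away xi by blast
qed

end
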